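(* Let $k\ge2$, $1\le m<k$, and alternatives $\ell=1,\dots,k$ with i.i.d. replications (independent across alternatives) whose means are pairwise distinct and ordered $\mu_{\langle 1\rangle}>\dots>\mu_{\langle k\rangle}$, satisfying Assumptions 1–4 of the context. For $i\in\{1,\dots,m\}$, $j\in\{m+1,\dots,k\}$ and $r_{\langle i\rangle},r_{\langle j\rangle}\ge0$ define $G_{ij}(r_{\langle i\rangle},r_{\langle j\rangle})=\inf_{x\in\mathbb R}\big(r_{\langle i\rangle}\Lambda^*_{\langle i\rangle}(x)+r_{\langle j\rangle}\Lambda^*_{\langle j\rangle}(x)\big)$. Then on $\{(r_{\langle i\rangle},r_{\langle j\rangle})>0\}$, $G_{ij}$ is strictly increasing in $r_{\langle i\rangle}$ and strictly increasing in $r_{\langle j\rangle}$; moreover $G_{ij}(r_{\langle i\rangle},r_{\langle j\rangle})=0$ whenever $\min(r_{\langle i\rangle},r_{\langle j\rangle})=0$.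
   Context: $\bar X_\ell(n)$ is the sample mean of $n$ replications of alternative $\ell$, $\Lambda^{(n)}_\ell(\lambda)=\log\mathbb E[e^{\lambda\bar X_\ell(n)}]$. Assumption 1: $\Lambda_\ell(\lambda)=\lim_{n\to\infty}\frac1n\Lambda^{(n)}_\ell(n\lambda)$ exists as an extended real number for all $\lambda$. With $\mathcal D_{\Lambda_\ell}=\{\lambda:\Lambda_\ell(\lambda)<\infty\}$, interior $\mathcal D^o_{\Lambda_\ell}$, and $\mathcal F_\ell=\{\Lambda'_\ell(\lambda):\lambda\in\mathcal D^o_{\Lambda_\ell}\}$, interior $\mathcal F^o_\ell$: Assumption 2: $0\in\mathcal D^o_{\Lambda_\ell}$. Assumption 3: $\Lambda_\ell$ strictly convex, continuous on $\mathcal D^o_{\Lambda_\ell}$ and steep ($|\Lambda'_\ell(\lambda_n)|\to\infty$ along sequences tending to a boundary point of $\mathcal D^o_{\Lambda_\ell}$). Assumption 4: $[\mu_{\langle k\rangle},\mu_{\langle1\rangle}]\subset\bigcap_\ell\mathcal F^o_\ell$. $\Lambda^*_\ell(x)=\sup_\lambda\{\lambda x-\Lambda_\ell(\lambda)\}$. *)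

theory Defs
  imports "HOL-Probability.Probability"
begin

text \<open>Natural logarithm on nonnegative extended reals (the argument is an expectation
  of a positive quantity, possibly infinite); log of infinity is infinity.\<close>
definition ln_ennreal :: "ennreal \<Rightarrow> ereal" where
  "ln_ennreal v = (if v = \<top> then \<infinity> else ereal (ln (enn2real v)))"

definition sample_mean :: "(nat \<Rightarrow> nat \<Rightarrow> 'a \<Rightarrow> real) \<Rightarrow> nat \<Rightarrow> nat \<Rightarrow> 'a \<Rightarrow> real" where
  "sample_mean X l n \<omega> = (\<Sum>r<n. X l r \<omega>) / real n"

definition Lambda_n :: "'a measure \<Rightarrow> (nat \<Rightarrow> nat \<Rightarrow> 'a \<Rightarrow> real) \<Rightarrow> nat \<Rightarrow> nat \<Rightarrow> real \<Rightarrow> ereal" where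
  "Lambda_n M X l n t = ln_ennreal (\<integral>\<^sup>+ \<omega>. ennreal (exp (t * sample_mean X l n \<omega>)) \<partial>M)"

definition scaled_cgf :: "'a measure \<Rightarrow> (nat \<Rightarrow> nat \<Rightarrow> 'a \<Rightarrow> real) \<Rightarrow> nat \<Rightarrow> real \<Rightarrow> nat \<Rightarrow> ereal" where
  "scaled_cgf M X l t n = Lambda_n M X l n (real n * t) / ereal (real n)"

text \<open>Lambda_l(lambda) = lim (1/n) Lambda^(n)_l(n lambda) (meaningful under Assumption 1).\<close>
definition Lambda :: "'a measure \<Rightarrow> (nat \<Rightarrow> nat \<Rightarrow> 'a \<Rightarrow> real) \<Rightarrow> nat \<Rightarrow> real \<Rightarrow> ereal" where
  "Lambda M X l t = lim (scaled_cgf M X l t)"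

definition dom_Lambda :: "'a measure \<Rightarrow> (nat \<Rightarrow> nat \<Rightarrow> 'a \<Rightarrow> real) \<Rightarrow> nat \<Rightarrow> real set" where
  "dom_Lambda M X l = {t. Lambda M X l t < \<infinity>}"

text \<open>Real-valued version of Lambda_l (used on the interior of its domain).\<close>
definition Lambda_r :: "'a measure \<Rightarrow> (nat \<Rightarrow> nat \<Rightarrow> 'a \<Rightarrow> real) \<Rightarrow> nat \<Rightarrow> real \<Rightarrow> real" where
  "Lambda_r M X l t = real_of_ereal (Lambda M X l t)"

definition F_set :: "'a measure \<Rightarrow> (nat \<Rightarrow> nat \<Rightarrow> 'a \<Rightarrow> real) \<Rightarrow> nat \<Rightarrow> real set" where
  "F_set M X l = (\<lambda>z. deriv (Lambda_r M X l) z) ` interior (dom_Lambda M X l)"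

definition Lambda_star :: "'a measure \<Rightarrow> (nat \<Rightarrow> nat \<Rightarrow> 'a \<Rightarrow> real) \<Rightarrow> nat \<Rightarrow> real \<Rightarrow> ereal" where
  "Lambda_star M X l x = (SUP t. ereal (t * x) - Lambda M X l t)"

definition assm1 where
  "assm1 M X l \<longleftrightarrow> (\<forall>t. convergent (scaled_cgf M X l t))"

definition assm2 where
  "assm2 M X l \<longleftrightarrow> 0 \<in> interior (dom_Lambda M X l)"

definition assm3 where
  "assm3 M X l \<longleftrightarrow>
     (let D = interior (dom_Lambda M X l); f = Lambda_r M X l in
        (\<forall>a\<in>D. \<forall>b\<in>D. \<forall>t::real. a \<noteq> b \<and> 0 < t \<and> t < 1 \<longrightarrow>
            f (t * a + (1 - t) * b) < t * f a + (1 - t) * f b)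
      \<and> continuous_on D f
      \<and> (\<forall>t\<in>D. f differentiable (at t))
      \<and> (\<forall>s b. (\<forall>n. s n \<in> D) \<longrightarrow> b \<in> frontier D \<longrightarrow> s \<longlonglongrightarrow> b \<longrightarrow>
             filterlim (\<lambda>n. \<bar>deriv f (s n)\<bar>) at_top sequentially))"

text \<open>G_ij(r_i, r_j) = inf_x (r_i Lambda^*_<i>(x) + r_j Lambda^*_<j>(x)),
  with sigma i = <i> the index of the i-th largest mean.\<close>
definition G :: "'a measure \<Rightarrow> (nat \<Rightarrow> nat \<Rightarrow> 'a \<Rightarrow> real) \<Rightarrow> (nat \<Rightarrow> nat) \<Rightarrow> nat \<Rightarrow> nat \<Rightarrow> real \<Rightarrow> real \<Rightarrow> ereal" where
  "G M X \<sigma> i j ri rj =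
     (INF x. ereal ri * Lambda_star M X (\<sigma> i) x + ereal rj * Lambda_star M X (\<sigma> j) x)"

end

theory Submission
  imports Defs
begin

(* For i.i.d. replications Lambda_l is the logarithmic moment generating function of a single
   replication, so Lambda*_l is its Legendre transform: a convex, lower semicontinuous rate
   function that vanishes only at the mean, is o(|x - mean|) near it, and is finite at every
   slope of Lambda_l; by Assumption 4 the other mean is such a slope.
   Let a = mu_<i> and b = mu_<j> be the two means and fix weights p, q > 0. Moving from a
   slightly towards b shows G(p, q) < q Lambda*_<j>(a). Near a the term q Lambda*_<j> alone then
   exceeds G(p, q) by lower semicontinuity, while away from a the rate Lambda*_<i> is at least
   some eta > 0, so raising p to p' adds at least (p' - p) eta. Hence G(p', q) > G(p, q); the
   second variable is symmetric, and G vanishes if a weight is zero because each rate vanishes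
   at its own mean. *)

definition legendre :: "real set \<Rightarrow> (real \<Rightarrow> real) \<Rightarrow> real \<Rightarrow> ereal" where
  "legendre D L x = (SUP t\<in>D. ereal (t * x - L t))"

lemma legendre_upper: "t \<in> D \<Longrightarrow> ereal (t * x - L t) \<le> legendre D L x"
  unfolding legendre_def by (rule SUP_upper)

lemma legendre_least: "(\<And>t. t \<in> D \<Longrightarrow> t * x - L t \<le> B) \<Longrightarrow> legendre D L x \<le> ereal B"
  unfolding legendre_def by (rule SUP_least) simp

lemma legendre_convex:
  assumes "0 \<le> \<theta>" "\<theta> \<le> 1"
  shows "legendre D L ((1 - \<theta>) * u + \<theta> * w)
           \<le> ereal (1 - \<theta>) * legendre D L u + ereal \<theta> * legendre D L w"
  unfolding legendre_def [of D L "(1 - \<theta>) * u + \<theta> * w"]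
proof (rule SUP_least)
  fix t assume "t \<in> D"
  have "ereal (t * ((1 - \<theta>) * u + \<theta> * w) - L t)
          = ereal (1 - \<theta>) * ereal (t * u - L t) + ereal \<theta> * ereal (t * w - L t)"
    by (simp add: algebra_simps)
  also have "\<dots> \<le> ereal (1 - \<theta>) * legendre D L u + ereal \<theta> * legendre D L w"
    using assms \<open>t \<in> D\<close> by (intro add_mono ereal_mult_left_mono legendre_upper) auto
  finally show "ereal (t * ((1 - \<theta>) * u + \<theta> * w) - L t) \<le> \<dots>" .
qed

lemma legendre_lower_semicontinuous:
  assumes "c < legendre D L x"
  shows "\<forall>\<^sub>F y in nhds x. c < legendre D L y"
proof -
  obtain t where t: "t \<in> D" "c < ereal (t * x - L t)"
    using assms unfolding legendre_def less_SUP_iff by blast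
  have "((\<lambda>y. ereal (t * y - L t)) \<longlongrightarrow> ereal (t * x - L t)) (nhds x)"
    by (intro tendsto_intros filterlim_ident)
  from order_tendstoD(1)[OF this t(2)] show ?thesis
    by eventually_elim (use legendre_upper[OF t(1)] in \<open>blast intro: less_le_trans\<close>)
qed

locale cgf =
  fixes D :: "real set" and L :: "real \<Rightarrow> real" and \<mu> :: real
  assumes convex_dom: "convex D"
    and zero_interior: "0 \<in> interior D"
    and L_zero: "L 0 = 0"
    and convex_L: "convex_on D L"
    and strictly_above_tangent: "\<And>t. t \<in> D \<Longrightarrow> t \<noteq> 0 \<Longrightarrow> \<mu> * t < L t"
    and has_deriv_zero: "(L has_real_derivative \<mu>) (at 0)"
begin

abbreviation rate :: "real \<Rightarrow> ereal" where
  "rate \<equiv> legendre D L"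

lemma zero_in_dom: "0 \<in> D"
  using zero_interior interior_subset by blast

lemma above_tangent: "t \<in> D \<Longrightarrow> \<mu> * t \<le> L t"
  using strictly_above_tangent[of t] L_zero by (cases "t = 0") auto

lemma rate_nonneg: "0 \<le> rate x"
  using legendre_upper[OF zero_in_dom, of x L] by (simp add: L_zero zero_ereal_def)

lemma rate_mean: "rate \<mu> = 0"
proof -
  have "rate \<mu> \<le> ereal 0"
    by (rule legendre_least) (use above_tangent in \<open>simp add: mult.commute\<close>)
  then show ?thesis
    using rate_nonneg[of \<mu>] by (simp add: zero_ereal_def)
qed

lemma rate_pos:
  assumes "x \<noteq> \<mu>"
  shows "0 < rate x"
proof (rule ccontr)
  assume "\<not> 0 < rate x"
  then have "ereal (t * x - L t) \<le> 0" if "t \<in> D" for t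
    using legendre_upper[OF that, of x L] by (meson not_less order_trans)
  then have le: "t * x - L t \<le> 0" if "t \<in> D" for t
    using that by (simp add: zero_ereal_def)
  obtain d where d: "0 < d" "ball 0 d \<subseteq> D"
    using zero_interior mem_interior by blast
  \<comment> \<open>The concave function \<open>t * x - L t\<close> has slope \<open>x - \<mu>\<close> at its local maximum \<open>0\<close>.\<close>
  have "((\<lambda>t. t * x - L t) has_real_derivative x - \<mu>) (at 0)"
    using has_deriv_zero by (auto intro!: derivative_eq_intros)
  moreover have "\<forall>t. \<bar>0 - t\<bar> < d \<longrightarrow> t * x - L t \<le> 0 * x - L 0"
    using d le by (auto simp: L_zero subset_iff)
  ultimately have "x - \<mu> = 0"
    by (rule DERIV_local_max[OF _ d(1)])
  with assms show False by simp
qed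

lemma rate_toward_mean:
  assumes "0 \<le> \<theta>" "\<theta> \<le> 1"
  shows "rate ((1 - \<theta>) * \<mu> + \<theta> * x) \<le> ereal \<theta> * rate x"
  using legendre_convex[OF assms, of D L \<mu> x] by (simp add: rate_mean)

lemma rate_ge_at_distance:
  assumes "0 < \<delta>" "\<delta> \<le> \<bar>y - \<mu>\<bar>"
  shows "min (rate (\<mu> - \<delta>)) (rate (\<mu> + \<delta>)) \<le> rate y"
proof -
  define \<theta> where "\<theta> = \<delta> / \<bar>y - \<mu>\<bar>"
  have \<theta>: "0 \<le> \<theta>" "\<theta> \<le> 1"
    using assms by (auto simp: \<theta>_def)
  have "(1 - \<theta>) * \<mu> + \<theta> * y = \<mu> + \<theta> * (y - \<mu>)"
    by (simp add: algebra_simps)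
  also have "\<theta> * (y - \<mu>) = (if \<mu> \<le> y then \<delta> else - \<delta>)"
    using assms by (auto simp: \<theta>_def abs_if field_simps)
  finally have "min (rate (\<mu> - \<delta>)) (rate (\<mu> + \<delta>)) \<le> rate ((1 - \<theta>) * \<mu> + \<theta> * y)"
    by (auto split: if_splits)
  also have "\<dots> \<le> ereal \<theta> * rate y"
    by (rule rate_toward_mean[OF \<theta>])
  also have "\<dots> \<le> rate y"
    using \<theta> rate_nonneg[of y] by (cases "rate y") (auto simp: mult_left_le_one_le)
  finally show ?thesis .
qed

lemma rate_bounded_away_from_mean:
  assumes "0 < \<delta>"
  obtains \<eta> where "0 < \<eta>" "\<And>y. \<delta> \<le> \<bar>y - \<mu>\<bar> \<Longrightarrow> ereal \<eta> \<le> rate y"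
proof -
  have "0 < min (rate (\<mu> - \<delta>)) (rate (\<mu> + \<delta>))"
    using rate_pos assms by simp
  then obtain \<eta> where "0 < \<eta>" "ereal \<eta> < min (rate (\<mu> - \<delta>)) (rate (\<mu> + \<delta>))"
    using ereal_dense2 by (metis ereal_less(2) less_trans)
  then show ?thesis
    using that rate_ge_at_distance[OF assms] by (meson less_imp_le order_trans)
qed

lemma scaled_mem_dom:
  assumes "t \<in> D" "0 \<le> c" "c \<le> 1"
  shows "c * t \<in> D"
  using convexD[OF convex_dom zero_in_dom assms(1), of "1 - c" c] assms(2,3) by simp

lemma tangent_gap_scaled:
  assumes "t \<in> D" "0 \<le> c" "c \<le> 1"
  shows "L (c * t) - \<mu> * (c * t) \<le> c * (L t - \<mu> * t)"
  using convex_onD[OF convex_L, of c 0 t] zero_in_dom assms by (simp add: L_zero algebra_simps)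

lemma rate_little_o_toward:
  assumes "0 < \<epsilon>"
  shows "\<forall>\<^sub>F \<theta> in at_right 0. rate ((1 - \<theta>) * \<mu> + \<theta> * z) \<le> ereal (\<epsilon> * \<theta>)"
proof -
  define w where "w = z - \<mu>"
  define r where "r = \<epsilon> / w"
  define h where "h = (if r \<in> D \<and> r \<noteq> 0 then (L r - \<mu> * r) / \<epsilon> else 1)"
  have h: "0 < h"
    using strictly_above_tangent[of r] assms by (auto simp: h_def)
  have "rate ((1 - \<theta>) * \<mu> + \<theta> * z) \<le> ereal (\<epsilon> * \<theta>)" if \<theta>: "0 < \<theta>" "\<theta> < h" for \<theta>
  proof (rule legendre_least)
    fix t assume t: "t \<in> D"
    have eq: "t * ((1 - \<theta>) * \<mu> + \<theta> * z) - L t = \<theta> * (t * w) - (L t - \<mu> * t)"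
      by (simp add: w_def algebra_simps)
    have "\<theta> * (t * w) \<le> \<epsilon> * \<theta> \<or> \<theta> * (t * w) \<le> L t - \<mu> * t"
    proof (cases "t * w \<le> \<epsilon>")
      case True
      then show ?thesis
        using mult_left_mono[OF True, of \<theta>] \<theta> by (simp add: mult.commute)
    next
      case False
      \<comment> \<open>The point \<open>r = \<epsilon> / w\<close> lies between \<open>0\<close> and \<open>t\<close>, so the gap \<open>L t - \<mu> * t\<close>
        is at least \<open>t * w / \<epsilon>\<close> times the gap at \<open>r\<close>, which exceeds \<open>\<epsilon> * \<theta>\<close>.\<close>
      define c where "c = \<epsilon> / (t * w)"
      have tw: "0 < t * w" and c: "0 < c" "c < 1" "c * (t * w) = \<epsilon>"
        using False assms by (auto simp: c_def)
      then have r: "r = c * t" "r \<noteq> 0"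
        by (auto simp: r_def c_def)
      then have "r \<in> D"
        using scaled_mem_dom[OF t] c by simp
      have "(L r - \<mu> * r) * (t * w) \<le> c * (L t - \<mu> * t) * (t * w)"
        using tangent_gap_scaled[OF t, of c] c tw r by (intro mult_right_mono) auto
      also have "\<dots> = \<epsilon> * (L t - \<mu> * t)"
        by (simp only: c(3)[symmetric] ac_simps)
      finally have "(L r - \<mu> * r) * (t * w) \<le> \<epsilon> * (L t - \<mu> * t)" .
      moreover have "\<epsilon> * \<theta> \<le> L r - \<mu> * r"
        using \<theta> \<open>r \<in> D\<close> r(2) assms by (simp add: h_def field_simps)
      ultimately have "\<epsilon> * (\<theta> * (t * w)) \<le> \<epsilon> * (L t - \<mu> * t)"
        using mult_right_mono[of "\<epsilon> * \<theta>" "L r - \<mu> * r" "t * w"] tw by (simp add: mult.assoc)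
      then show ?thesis
        using assms by simp
    qed
    then show "t * ((1 - \<theta>) * \<mu> + \<theta> * z) - L t \<le> \<epsilon> * \<theta>"
      using eq above_tangent[OF t] mult_pos_pos[OF assms \<theta>(1)] by arith
  qed
  then show ?thesis
    unfolding eventually_at_right_field using h by blast
qed

lemma rate_at_slope:
  assumes "t\<^sub>0 \<in> interior D" "(L has_real_derivative s) (at t\<^sub>0)"
  shows "rate s \<le> ereal (t\<^sub>0 * s - L t\<^sub>0)"
proof (rule legendre_least)
  fix t assume "t \<in> D"
  have "s * (t - t\<^sub>0) \<le> L t - L t\<^sub>0"
    by (rule convex_on_imp_above_tangent[OF convex_L convex_connected[OF convex_dom] assms(1) \<open>t \<in> D\<close>])
      (rule has_field_derivative_at_within[OF assms(2)])
  then show "t * s - L t \<le> t\<^sub>0 * s - L t\<^sub>0"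
    by (simp add: algebra_simps)
qed

end

lemma ereal_distrib_right_nonneg:
  fixes y :: ereal
  assumes "0 \<le> p" "0 \<le> r" "0 \<le> y"
  shows "ereal (p + r) * y = ereal p * y + ereal r * y"
  using assms by (cases y) (auto simp: distrib_right)

locale cgf_pair = f: cgf D\<^sub>f L\<^sub>f a + g: cgf D\<^sub>g L\<^sub>g b
  for D\<^sub>f L\<^sub>f a D\<^sub>g L\<^sub>g b +
  assumes means_differ: "a \<noteq> b"
begin

definition mixed_rate :: "real \<Rightarrow> real \<Rightarrow> ereal" where
  "mixed_rate p q = (INF x. ereal p * f.rate x + ereal q * g.rate x)"

lemma mixed_rate_le: "mixed_rate p q \<le> ereal p * f.rate x + ereal q * g.rate x"
  unfolding mixed_rate_def by (rule INF_lower) simp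

lemma mixed_rate_nonneg:
  assumes "0 \<le> p" "0 \<le> q"
  shows "0 \<le> mixed_rate p q"
  unfolding mixed_rate_def
  using assms f.rate_nonneg g.rate_nonneg by (intro INF_greatest add_nonneg_nonneg ereal_0_le_mult) auto

lemma mixed_rate_degenerate:
  assumes "0 \<le> p" "0 \<le> q" "min p q = 0"
  shows "mixed_rate p q = 0"
proof (rule antisym)
  have "p = 0 \<or> q = 0"
    using assms(3) by linarith
  then show "mixed_rate p q \<le> 0"
    using mixed_rate_le[of p q b] mixed_rate_le[of p q a]
    by (auto simp: f.rate_mean g.rate_mean zero_ereal_def[symmetric])
qed (use mixed_rate_nonneg assms in auto)

lemma weighted_rates_increase:
  assumes "ereal \<eta> \<le> f.rate x" "0 \<le> p" "p \<le> p'"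
  shows "(ereal p * f.rate x + ereal q * g.rate x) + ereal ((p' - p) * \<eta>)
           \<le> ereal p' * f.rate x + ereal q * g.rate x"
proof -
  have "(ereal p * f.rate x + ereal q * g.rate x) + ereal ((p' - p) * \<eta>)
      = (ereal p * f.rate x + ereal q * g.rate x) + ereal (p' - p) * ereal \<eta>"
    by simp
  also have "\<dots> \<le> (ereal p * f.rate x + ereal q * g.rate x) + ereal (p' - p) * f.rate x"
    using assms by (intro add_left_mono ereal_mult_left_mono) auto
  also have "\<dots> = ereal p' * f.rate x + ereal q * g.rate x"
    using ereal_distrib_right_nonneg[of p "p' - p" "f.rate x"] f.rate_nonneg[of x] assms
    by (simp add: ac_simps)
  finally show ?thesis .
qed

lemma mixed_rate_less:
  assumes "0 < p" "0 < q" "g.rate a < \<infinity>"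
  shows "mixed_rate p q < ereal q * g.rate a"
proof -
  obtain \<gamma> where \<gamma>: "g.rate a = ereal \<gamma>"
    using assms(3) g.rate_nonneg[of a] by (cases "g.rate a") auto
  have "0 < \<gamma>"
    using g.rate_pos[of a] means_differ \<gamma> by auto
  define \<epsilon> where "\<epsilon> = q * \<gamma> / (2 * p)"
  have "0 < \<epsilon>"
    using \<open>0 < \<gamma>\<close> assms by (simp add: \<epsilon>_def)
  then obtain h where "0 < h" and
    h: "\<And>\<theta>. 0 < \<theta> \<Longrightarrow> \<theta> < h \<Longrightarrow> f.rate ((1 - \<theta>) * a + \<theta> * b) \<le> ereal (\<epsilon> * \<theta>)"
    using f.rate_little_o_toward[of \<epsilon> b] unfolding eventually_at_right_field by blast
  \<comment> \<open>Move from \<open>a\<close> slightly towards \<open>b\<close>: the first rate grows like \<open>o(\<theta>)\<close>, the second one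
    drops linearly.\<close>
  define \<theta> where "\<theta> = min h 1 / 2"
  have \<theta>: "0 < \<theta>" "\<theta> < h" "\<theta> < 1"
    using \<open>0 < h\<close> by (auto simp: \<theta>_def)
  define x where "x = (1 - \<theta>) * a + \<theta> * b"
  have "x = (1 - (1 - \<theta>)) * b + (1 - \<theta>) * a"
    by (simp add: x_def algebra_simps)
  then have gx: "g.rate x \<le> ereal ((1 - \<theta>) * \<gamma>)"
    using g.rate_toward_mean[of "1 - \<theta>" a] \<theta> \<gamma> by simp
  have "mixed_rate p q \<le> ereal p * f.rate x + ereal q * g.rate x"
    by (rule mixed_rate_le)
  also have "\<dots> \<le> ereal p * ereal (\<epsilon> * \<theta>) + ereal q * ereal ((1 - \<theta>) * \<gamma>)"
    using h[OF \<theta>(1,2)] gx assms by (intro add_mono ereal_mult_left_mono) (auto simp: x_def)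
  also have "\<dots> = ereal (q * \<gamma> - \<theta> * q * \<gamma> / 2)"
    using assms by (simp add: \<epsilon>_def field_simps)
  also have "\<dots> < ereal q * g.rate a"
    using \<theta> assms \<open>0 < \<gamma>\<close> \<gamma> by simp
  finally show ?thesis .
qed

lemma mixed_rate_strict_mono_left:
  assumes "0 < p" "p < p'" "0 < q" "g.rate a < \<infinity>"
  shows "mixed_rate p q < mixed_rate p' q"
proof -
  define K where "K = mixed_rate p q"
  obtain c where c: "K < ereal c" "ereal c < ereal q * g.rate a"
    using mixed_rate_less[of p q] assms ereal_dense2 unfolding K_def by blast
  obtain \<kappa> where \<kappa>: "K = ereal \<kappa>"
    using c(1) mixed_rate_nonneg[of p q] assms unfolding K_def[symmetric] by (cases K) auto
  have "ereal (c / q) < g.rate a"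
    using c(2) assms(3,4) g.rate_nonneg[of a] by (cases "g.rate a") (auto simp: field_simps)
  then obtain \<delta> where "0 < \<delta>" and near: "\<And>y. dist y a < \<delta> \<Longrightarrow> ereal (c / q) < g.rate y"
    using legendre_lower_semicontinuous unfolding eventually_nhds_metric by blast
  obtain \<eta> where "0 < \<eta>" and far: "\<And>y. \<delta> \<le> \<bar>y - a\<bar> \<Longrightarrow> ereal \<eta> \<le> f.rate y"
    using f.rate_bounded_away_from_mean[OF \<open>0 < \<delta>\<close>] by blast
  \<comment> \<open>Near \<open>a\<close> the second rate alone exceeds \<open>c > K\<close>; away from \<open>a\<close> the first rate is at
    least \<open>\<eta>\<close>, so raising its weight adds at least \<open>(p' - p) * \<eta>\<close>.\<close>
  have bound: "min (ereal c) (K + ereal ((p' - p) * \<eta>)) \<le> ereal p' * f.rate x + ereal q * g.rate x"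
    for x
  proof (cases "dist x a < \<delta>")
    case True
    have "ereal c = ereal q * ereal (c / q)"
      using assms by simp
    also have "\<dots> \<le> ereal q * g.rate x"
      using near[OF True] assms by (intro ereal_mult_left_mono) auto
    also have "\<dots> \<le> ereal p' * f.rate x + ereal q * g.rate x"
      using f.rate_nonneg[of x] assms by (intro add_increasing ereal_0_le_mult) auto
    finally show ?thesis
      by (rule min.coboundedI1)
  next
    case False
    then have "ereal \<eta> \<le> f.rate x"
      by (intro far) (simp add: dist_real_def)
    have "K + ereal ((p' - p) * \<eta>) \<le> (ereal p * f.rate x + ereal q * g.rate x) + ereal ((p' - p) * \<eta>)"
      unfolding K_def by (intro add_right_mono mixed_rate_le)
    also have "\<dots> \<le> ereal p' * f.rate x + ereal q * g.rate x"
      using \<open>ereal \<eta> \<le> f.rate x\<close> assms by (intro weighted_rates_increase) auto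
    finally show ?thesis
      by (rule min.coboundedI2)
  qed
  have "K < min (ereal c) (K + ereal ((p' - p) * \<eta>))"
    using c(1) \<kappa> assms \<open>0 < \<eta>\<close> by simp
  also have "\<dots> \<le> mixed_rate p' q"
    unfolding mixed_rate_def by (rule INF_greatest) (rule bound)
  finally show ?thesis
    unfolding K_def .
qed

end

lemma cgf_pair_swap: "cgf_pair D\<^sub>f L\<^sub>f a D\<^sub>g L\<^sub>g b \<Longrightarrow> cgf_pair D\<^sub>g L\<^sub>g b D\<^sub>f L\<^sub>f a"
  unfolding cgf_pair_def cgf_pair_axioms_def by auto

lemma (in cgf_pair) mixed_rate_swap:
  "cgf_pair.mixed_rate D\<^sub>g L\<^sub>g D\<^sub>f L\<^sub>f q p = mixed_rate p q"
  using cgf_pair.mixed_rate_def[OF cgf_pair_swap[OF cgf_pair_axioms]]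
  by (simp add: mixed_rate_def add.commute)

lemma (in cgf_pair) mixed_rate_monotonicity:
  assumes "f.rate b < \<infinity>" "g.rate a < \<infinity>"
  shows "(\<forall>p p' q. 0 < p \<and> p < p' \<and> 0 < q \<longrightarrow> mixed_rate p q < mixed_rate p' q)
       \<and> (\<forall>p q q'. 0 < p \<and> 0 < q \<and> q < q' \<longrightarrow> mixed_rate p q < mixed_rate p q')
       \<and> (\<forall>p q. 0 \<le> p \<and> 0 \<le> q \<and> min p q = 0 \<longrightarrow> mixed_rate p q = 0)"
proof (intro conjI allI impI)
  interpret swapped: cgf_pair D\<^sub>g L\<^sub>g b D\<^sub>f L\<^sub>f a
    by (rule cgf_pair_swap[OF cgf_pair_axioms])
  fix p q q' :: real
  assume "0 < p \<and> 0 < q \<and> q < q'"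
  then have "swapped.mixed_rate q p < swapped.mixed_rate q' p"
    using swapped.mixed_rate_strict_mono_left assms(1) by blast
  then show "mixed_rate p q < mixed_rate p q'"
    by (simp only: mixed_rate_swap)
qed (use mixed_rate_strict_mono_left mixed_rate_degenerate assms(2) in auto)

lemma supporting_line_strict:
  fixes L :: "real \<Rightarrow> real"
  assumes "convex D" "0 \<in> interior D" "L 0 = 0" "convex_on D L"
    and line: "\<And>t. t \<in> D \<Longrightarrow> \<mu> * t \<le> L t"
    and strict: "\<And>u v \<theta>. u \<in> interior D \<Longrightarrow> v \<in> interior D \<Longrightarrow> u \<noteq> v \<Longrightarrow> 0 < \<theta> \<Longrightarrow> \<theta> < 1 \<Longrightarrow>
        L ((1 - \<theta>) * u + \<theta> * v) < (1 - \<theta>) * L u + \<theta> * L v"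
    and "t \<in> D" "t \<noteq> 0"
  shows "\<mu> * t < L t"
proof (rule ccontr)
  \<comment> \<open>By convexity \<open>L\<close> would coincide with the line on \<open>[0, t]\<close>, contradicting strict
    convexity on the segment \<open>[0, t / 2]\<close> inside the interior.\<close>
  assume "\<not> \<mu> * t < L t"
  define s where "s = t / 2"
  have "s \<in> interior D" "s \<noteq> 0"
    using mem_interior_convex_shrink[OF assms(1,2,7), of "1 / 2"] assms(8) by (simp_all add: s_def)
  have "0 \<in> D" "s \<in> D"
    using assms(2) \<open>s \<in> interior D\<close> interior_subset by auto
  then have "s / 2 \<in> D"
    using convexD[OF assms(1), of 0 s "1 / 2" "1 / 2"] by simp
  have "L s \<le> (1 - 1 / 2) * L 0 + 1 / 2 * L t"
    using convex_onD[OF assms(4), of "1 / 2" 0 t] \<open>0 \<in> D\<close> assms(7) by (simp add: s_def)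
  then have "L s = \<mu> * s"
    using line[OF \<open>s \<in> D\<close>] \<open>\<not> \<mu> * t < L t\<close> assms(3) by (simp add: s_def)
  moreover have "L ((1 - 1 / 2) * 0 + 1 / 2 * s) < (1 - 1 / 2) * L 0 + 1 / 2 * L s"
    using strict[of 0 s "1 / 2"] assms(2) \<open>s \<in> interior D\<close> \<open>s \<noteq> 0\<close> by simp
  ultimately show False
    using line[OF \<open>s / 2 \<in> D\<close>] assms(3) by simp
qed

lemma supporting_slope_eq_deriv:
  fixes L :: "real \<Rightarrow> real"
  assumes "0 \<in> interior D" "L 0 = 0" "\<And>t. t \<in> D \<Longrightarrow> \<mu> * t \<le> L t"
    and "(L has_real_derivative d) (at 0)"
  shows "d = \<mu>"
proof -
  obtain \<epsilon> where "0 < \<epsilon>" "ball 0 \<epsilon> \<subseteq> D"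
    using assms(1) unfolding mem_interior by blast
  have "((\<lambda>t. L t - \<mu> * t) has_real_derivative d - \<mu>) (at 0)"
    using assms(4) by (auto intro!: derivative_eq_intros)
  moreover have "\<forall>t. \<bar>0 - t\<bar> < \<epsilon> \<longrightarrow> L 0 - \<mu> * 0 \<le> L t - \<mu> * t"
    using \<open>ball 0 \<epsilon> \<subseteq> D\<close> assms(2,3) by (auto simp: subset_iff)
  ultimately have "d - \<mu> = 0"
    by (rule DERIV_local_min[OF _ \<open>0 < \<epsilon>\<close>])
  then show ?thesis
    by simp
qed

lemma ln_ennreal_power:
  assumes "0 < n"
  shows "ln_ennreal (c ^ n) = ereal (real n) * ln_ennreal c"
proof (cases "c = \<top>")
  case True
  then show ?thesis
    using assms by (simp add: ln_ennreal_def power_eq_top_ennreal)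
next
  case False
  then obtain v where "c = ennreal v" "0 \<le> v"
    by (cases c) auto
  then show ?thesis
    by (simp add: ln_ennreal_def ennreal_power ln_realpow)
qed

definition mgf_dom :: "'a measure \<Rightarrow> ('a \<Rightarrow> real) \<Rightarrow> real set" where
  "mgf_dom M Y = {t. integrable M (\<lambda>\<omega>. exp (t * Y \<omega>))}"

definition log_mgf :: "'a measure \<Rightarrow> ('a \<Rightarrow> real) \<Rightarrow> real \<Rightarrow> real" where
  "log_mgf M Y t = ln (\<integral>\<omega>. exp (t * Y \<omega>) \<partial>M)"

context prob_space
begin

lemma nn_integral_exp_sum_iid:
  assumes "finite I" and indep: "indep_vars (\<lambda>_. borel) Z I"
    and ident: "\<And>i. i \<in> I \<Longrightarrow> distr M borel (Z i) = distr M borel Y"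
    and [measurable]: "Y \<in> borel_measurable M"
  shows "(\<integral>\<^sup>+\<omega>. ennreal (exp (t * (\<Sum>i\<in>I. Z i \<omega>))) \<partial>M)
           = (\<integral>\<^sup>+\<omega>. ennreal (exp (t * Y \<omega>)) \<partial>M) ^ card I"
proof -
  have Z: "Z i \<in> borel_measurable M" if "i \<in> I" for i
    using indep that unfolding indep_vars_def by auto
  have "(\<integral>\<^sup>+\<omega>. ennreal (exp (t * (\<Sum>i\<in>I. Z i \<omega>))) \<partial>M)
          = (\<integral>\<^sup>+\<omega>. (\<Prod>i\<in>I. ennreal (exp (t * Z i \<omega>))) \<partial>M)"
    using \<open>finite I\<close> by (simp add: sum_distrib_left exp_sum prod_ennreal)
  also have "\<dots> = (\<Prod>i\<in>I. \<integral>\<^sup>+\<omega>. ennreal (exp (t * Z i \<omega>)) \<partial>M)"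
    by (intro indep_vars_nn_integral \<open>finite I\<close>
        indep_vars_compose2[OF indep, where Y = "\<lambda>_ y. ennreal (exp (t * y))"]) auto
  also have "\<dots> = (\<Prod>i\<in>I. \<integral>\<^sup>+\<omega>. ennreal (exp (t * Y \<omega>)) \<partial>M)"
  proof (rule prod.cong [OF refl])
    fix i assume "i \<in> I"
    then show "(\<integral>\<^sup>+\<omega>. ennreal (exp (t * Z i \<omega>)) \<partial>M) = (\<integral>\<^sup>+\<omega>. ennreal (exp (t * Y \<omega>)) \<partial>M)"
      using nn_integral_distr[of "Z i" M borel "\<lambda>y. ennreal (exp (t * y))"]
        nn_integral_distr[of Y M borel "\<lambda>y. ennreal (exp (t * y))"] Z ident
      by simp
  qed
  finally show ?thesis
    by simp
qed

lemma ln_ennreal_nn_integral_exp: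
  assumes [measurable]: "Y \<in> borel_measurable M"
  shows "ln_ennreal (\<integral>\<^sup>+\<omega>. ennreal (exp (t * Y \<omega>)) \<partial>M)
           = (if t \<in> mgf_dom M Y then ereal (log_mgf M Y t) else \<infinity>)"
proof (cases "t \<in> mgf_dom M Y")
  case True
  then have "(\<integral>\<^sup>+\<omega>. ennreal (exp (t * Y \<omega>)) \<partial>M) = ennreal (\<integral>\<omega>. exp (t * Y \<omega>) \<partial>M)"
    unfolding mgf_dom_def by (intro nn_integral_eq_integral) auto
  then show ?thesis
    using True unfolding ln_ennreal_def log_mgf_def by simp
next
  case False
  have "(\<integral>\<^sup>+\<omega>. ennreal (exp (t * Y \<omega>)) \<partial>M) = \<top>"
  proof (rule ccontr)
    assume "(\<integral>\<^sup>+\<omega>. ennreal (exp (t * Y \<omega>)) \<partial>M) \<noteq> \<top>"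
    then have "t \<in> mgf_dom M Y"
      unfolding mgf_dom_def by (simp add: integrableI_nonneg less_top)
    with False show False ..
  qed
  with False show ?thesis
    unfolding ln_ennreal_def by simp
qed

lemma expectation_exp_pos:
  assumes "t \<in> mgf_dom M Y"
  shows "0 < (\<integral>\<omega>. exp (t * Y \<omega>) \<partial>M)"
proof -
  have "integrable M (\<lambda>\<omega>. exp (t * Y \<omega>))"
    using assms by (simp add: mgf_dom_def)
  then have "(\<integral>\<omega>. exp (t * Y \<omega>) \<partial>M) = 0 \<longleftrightarrow> (AE \<omega> in M. exp (t * Y \<omega>) = 0)"
    by (intro integral_nonneg_eq_0_iff_AE) auto
  then have "(\<integral>\<omega>. exp (t * Y \<omega>) \<partial>M) \<noteq> 0"
    using AE_False by simp
  moreover have "0 \<le> (\<integral>\<omega>. exp (t * Y \<omega>) \<partial>M)"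
    by simp
  ultimately show ?thesis
    by linarith
qed

lemma log_mgf_zero: "log_mgf M Y 0 = 0"
  by (simp add: log_mgf_def prob_space)

lemma nn_integral_exp_convex_combination_le:
  assumes [measurable]: "Y \<in> borel_measurable M"
    and "u \<in> mgf_dom M Y" "v \<in> mgf_dom M Y" "0 \<le> \<theta>" "\<theta> \<le> 1"
  shows "(\<integral>\<^sup>+\<omega>. ennreal (exp (((1 - \<theta>) * u + \<theta> * v) * Y \<omega>)) \<partial>M)
           \<le> ennreal (exp ((1 - \<theta>) * log_mgf M Y u + \<theta> * log_mgf M Y v))"
proof -
  define A B where "A = log_mgf M Y u" and "B = log_mgf M Y v"
  define K where "K = (1 - \<theta>) * A + \<theta> * B"
  have intu: "integrable M (\<lambda>\<omega>. exp (u * Y \<omega>))" and intv: "integrable M (\<lambda>\<omega>. exp (v * Y \<omega>))"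
    using assms by (auto simp: mgf_dom_def)
  have expA: "exp A = (\<integral>\<omega>. exp (u * Y \<omega>) \<partial>M)" and expB: "exp B = (\<integral>\<omega>. exp (v * Y \<omega>) \<partial>M)"
    using expectation_exp_pos assms by (simp_all add: A_def B_def log_mgf_def)
  \<comment> \<open>Pointwise convexity of \<open>exp\<close> gives an integrable majorant with integral \<open>exp K\<close>
    (Hoelder's inequality in disguise).\<close>
  define R where "R \<omega> = exp K * ((1 - \<theta>) * exp (u * Y \<omega> - A) + \<theta> * exp (v * Y \<omega> - B))" for \<omega>
  have le_R: "exp (((1 - \<theta>) * u + \<theta> * v) * Y \<omega>) \<le> R \<omega>" for \<omega>
  proof -
    have "((1 - \<theta>) * u + \<theta> * v) * Y \<omega> = K + ((1 - \<theta>) * (u * Y \<omega> - A) + \<theta> * (v * Y \<omega> - B))"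
      by (simp add: K_def algebra_simps)
    then have "exp (((1 - \<theta>) * u + \<theta> * v) * Y \<omega>)
        = exp K * exp ((1 - \<theta>) * (u * Y \<omega> - A) + \<theta> * (v * Y \<omega> - B))"
      by (simp add: exp_add)
    also have "\<dots> \<le> R \<omega>"
      unfolding R_def using convex_onD[OF exp_convex, of \<theta>] assms(4,5) by simp
    finally show ?thesis .
  qed
  have "(\<integral>\<^sup>+\<omega>. ennreal (exp (((1 - \<theta>) * u + \<theta> * v) * Y \<omega>)) \<partial>M) \<le> (\<integral>\<^sup>+\<omega>. ennreal (R \<omega>) \<partial>M)"
    by (intro nn_integral_mono ennreal_leI le_R)
  also have "\<dots> = ennreal (\<integral>\<omega>. R \<omega> \<partial>M)"
    using intu intv le_R
    by (intro nn_integral_eq_integral) (auto simp: R_def exp_diff intro: order_trans[OF less_imp_le[OF exp_gt_zero]])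
  also have "(\<integral>\<omega>. R \<omega> \<partial>M) = exp K"
    using intu intv unfolding R_def exp_diff by (simp add: expA[symmetric] expB[symmetric] field_simps)
  finally show ?thesis
    by (simp add: K_def A_def B_def)
qed

lemma log_mgf_convex_combination:
  assumes [measurable]: "Y \<in> borel_measurable M"
    and "u \<in> mgf_dom M Y" "v \<in> mgf_dom M Y" "0 \<le> \<theta>" "\<theta> \<le> 1"
  defines "z \<equiv> (1 - \<theta>) * u + \<theta> * v" and "K \<equiv> (1 - \<theta>) * log_mgf M Y u + \<theta> * log_mgf M Y v"
  shows "z \<in> mgf_dom M Y \<and> log_mgf M Y z \<le> K"
proof -
  have nn: "(\<integral>\<^sup>+\<omega>. ennreal (exp (z * Y \<omega>)) \<partial>M) \<le> ennreal (exp K)"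
    unfolding z_def K_def by (rule nn_integral_exp_convex_combination_le[OF assms(1-5)])
  then have intz: "integrable M (\<lambda>\<omega>. exp (z * Y \<omega>))"
    using le_less_trans[OF nn ennreal_less_top] by (intro integrableI_nonneg) auto
  then have "ennreal (\<integral>\<omega>. exp (z * Y \<omega>) \<partial>M) = (\<integral>\<^sup>+\<omega>. ennreal (exp (z * Y \<omega>)) \<partial>M)"
    by (intro nn_integral_eq_integral[symmetric]) auto
  with nn have "(\<integral>\<omega>. exp (z * Y \<omega>) \<partial>M) \<le> exp K"
    by (metis ennreal_le_iff exp_ge_zero)
  moreover have "z \<in> mgf_dom M Y"
    using intz by (simp add: mgf_dom_def)
  ultimately show ?thesis
    unfolding log_mgf_def using expectation_exp_pos by (metis exp_gt_zero ln_exp ln_le_cancel_iff)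
qed


lemma convex_mgf_dom:
  assumes "Y \<in> borel_measurable M"
  shows "convex (mgf_dom M Y)"
  unfolding convex_alt using log_mgf_convex_combination[OF assms] by simp

lemma convex_on_log_mgf:
  assumes "Y \<in> borel_measurable M"
  shows "convex_on (mgf_dom M Y) (log_mgf M Y)"
  by (rule convex_onI[OF _ convex_mgf_dom[OF assms]])
    (use log_mgf_convex_combination[OF assms] in simp)

lemma integrable_of_zero_interior_mgf_dom:
  assumes [measurable]: "Y \<in> borel_measurable M" and "0 \<in> interior (mgf_dom M Y)"
  shows "integrable M Y"
proof -
  obtain d where "0 < d" "ball 0 d \<subseteq> mgf_dom M Y"
    using assms(2) unfolding mem_interior by blast
  define e where "e = d / 2"
  have "0 < e" "e \<in> mgf_dom M Y" "- e \<in> mgf_dom M Y"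
    using \<open>0 < d\<close> \<open>ball 0 d \<subseteq> mgf_dom M Y\<close> by (auto simp: e_def subset_iff)
  have bound: "\<bar>y\<bar> \<le> (exp (e * y) + exp (- e * y)) / e" for y
  proof -
    have "e * \<bar>y\<bar> \<le> exp (e * \<bar>y\<bar>)"
      using exp_ge_add_one_self[of "e * \<bar>y\<bar>"] by linarith
    also have "\<dots> \<le> exp (e * y) + exp (- e * y)"
      by (cases "0 \<le> y") auto
    finally show ?thesis
      using \<open>0 < e\<close> by (simp add: pos_le_divide_eq mult.commute)
  qed
  show ?thesis
  proof (rule Bochner_Integration.integrable_bound)
    show "integrable M (\<lambda>\<omega>. (exp (e * Y \<omega>) + exp (- e * Y \<omega>)) / e)"
      using \<open>e \<in> mgf_dom M Y\<close> \<open>- e \<in> mgf_dom M Y\<close> by (auto simp: mgf_dom_def)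
    show "AE \<omega> in M. norm (Y \<omega>) \<le> norm ((exp (e * Y \<omega>) + exp (- e * Y \<omega>)) / e)"
    proof (rule AE_I2)
      fix \<omega>
      have "norm (Y \<omega>) \<le> (exp (e * Y \<omega>) + exp (- e * Y \<omega>)) / e"
        using bound[of "Y \<omega>"] by (simp only: real_norm_def)
      also have "\<dots> \<le> norm ((exp (e * Y \<omega>) + exp (- e * Y \<omega>)) / e)"
        by (simp only: real_norm_def abs_ge_self)
      finally show "norm (Y \<omega>) \<le> norm ((exp (e * Y \<omega>) + exp (- e * Y \<omega>)) / e)" .
    qed
  qed simp

qed

lemma mean_le_log_mgf:
  assumes "integrable M Y" "t \<in> mgf_dom M Y"
  shows "expectation Y * t \<le> log_mgf M Y t"
proof -
  have "exp (expectation (\<lambda>\<omega>. t * Y \<omega>)) \<le> (\<integral>\<omega>. exp (t * Y \<omega>) \<partial>M)"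
    using assms exp_convex by (intro jensens_inequality[where I = UNIV]) (auto simp: mgf_dom_def)
  then show ?thesis
    using expectation_exp_pos[OF assms(2)] by (simp add: log_mgf_def ln_ge_iff mult.commute)
qed

lemma cgf_log_mgf:
  assumes Y: "Y \<in> borel_measurable M" and zero: "0 \<in> interior (mgf_dom M Y)"
    and strict: "\<And>u v \<theta>. u \<in> interior (mgf_dom M Y) \<Longrightarrow> v \<in> interior (mgf_dom M Y) \<Longrightarrow> u \<noteq> v \<Longrightarrow>
        0 < \<theta> \<Longrightarrow> \<theta> < 1 \<Longrightarrow>
        log_mgf M Y ((1 - \<theta>) * u + \<theta> * v) < (1 - \<theta>) * log_mgf M Y u + \<theta> * log_mgf M Y v"
    and deriv: "(log_mgf M Y has_real_derivative d) (at 0)"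
  shows "cgf (mgf_dom M Y) (log_mgf M Y) (expectation Y)"
proof
  have line: "expectation Y * t \<le> log_mgf M Y t" if "t \<in> mgf_dom M Y" for t
    using mean_le_log_mgf[OF integrable_of_zero_interior_mgf_dom[OF Y zero] that] .
  show "expectation Y * t < log_mgf M Y t" if "t \<in> mgf_dom M Y" "t \<noteq> 0" for t
    by (rule supporting_line_strict[OF convex_mgf_dom[OF Y] zero log_mgf_zero convex_on_log_mgf[OF Y]
          line strict that])
  show "(log_mgf M Y has_real_derivative expectation Y) (at 0)"
    using supporting_slope_eq_deriv[OF zero log_mgf_zero line deriv] deriv by simp
qed (use zero convex_mgf_dom[OF Y] convex_on_log_mgf[OF Y] log_mgf_zero in auto)

end

locale iid_replications = prob_space M for M :: "'a measure" +
  fixes X :: "nat \<Rightarrow> nat \<Rightarrow> 'a \<Rightarrow> real" and l :: nat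
  assumes measurable_X [measurable]: "\<And>r. X l r \<in> borel_measurable M"
    and indep_X: "indep_vars (\<lambda>_. borel) (\<lambda>(l, r). X l r) ({l} \<times> UNIV)"
    and ident_X: "\<And>r. distr M borel (X l r) = distr M borel (X l 0)"
begin

lemma Lambda_eq:
  "Lambda M X l t = (if t \<in> mgf_dom M (X l 0) then ereal (log_mgf M (X l 0) t) else \<infinity>)"
proof -
  define c where "c = (\<integral>\<^sup>+\<omega>. ennreal (exp (t * X l 0 \<omega>)) \<partial>M)"
  have scaled: "scaled_cgf M X l t (Suc n) = ln_ennreal c" for n
  proof -
    define I where "I = {l} \<times> {..<Suc n}"
    have "(\<Sum>i\<in>I. (\<lambda>(l, r). X l r) i \<omega>) = (\<Sum>r<Suc n. X l r \<omega>)" for \<omega>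
      using sum.cartesian_product[of "\<lambda>l r. X l r \<omega>" "{..<Suc n}" "{l}"]
      by (simp add: I_def case_prod_app)
    then have sum: "real (Suc n) * t * sample_mean X l (Suc n) \<omega> = t * (\<Sum>i\<in>I. (\<lambda>(l, r). X l r) i \<omega>)"
      for \<omega> by (simp add: sample_mean_def)
    have "(\<integral>\<^sup>+\<omega>. ennreal (exp (t * (\<Sum>i\<in>I. (\<lambda>(l, r). X l r) i \<omega>))) \<partial>M) = c ^ card I"
      unfolding c_def
      by (rule nn_integral_exp_sum_iid)
        (use indep_vars_subset[OF indep_X, of I] ident_X in \<open>auto simp: I_def\<close>)
    then have "Lambda_n M X l (Suc n) (real (Suc n) * t) = ln_ennreal (c ^ Suc n)"
      unfolding Lambda_n_def sum by (simp add: I_def card_cartesian_product)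
    then have "scaled_cgf M X l t (Suc n) = ereal (real (Suc n)) * ln_ennreal c / ereal (real (Suc n))"
      by (simp only: scaled_cgf_def ln_ennreal_power zero_less_Suc)
    also have "\<dots> = ln_ennreal c"
      by (subst ereal_divide_eq) auto
    finally show ?thesis .
  qed
  have "scaled_cgf M X l t \<longlonglongrightarrow> ln_ennreal c"
    by (rule LIMSEQ_imp_Suc) (simp only: scaled tendsto_const)
  then show ?thesis
    unfolding Lambda_def c_def by (simp add: limI ln_ennreal_nn_integral_exp)
qed

lemma dom_Lambda_eq: "dom_Lambda M X l = mgf_dom M (X l 0)"
  by (auto simp: dom_Lambda_def Lambda_eq)

lemma Lambda_r_eq: "t \<in> mgf_dom M (X l 0) \<Longrightarrow> Lambda_r M X l t = log_mgf M (X l 0) t"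
  by (simp add: Lambda_r_def Lambda_eq)

lemma Lambda_star_eq: "Lambda_star M X l x = legendre (mgf_dom M (X l 0)) (log_mgf M (X l 0)) x"
  unfolding Lambda_star_def legendre_def
proof (rule antisym)
  show "(SUP t. ereal (t * x) - Lambda M X l t)
      \<le> (SUP t\<in>mgf_dom M (X l 0). ereal (t * x - log_mgf M (X l 0) t))"
    by (rule SUP_least) (auto simp: Lambda_eq intro: SUP_upper2)
  show "(SUP t\<in>mgf_dom M (X l 0). ereal (t * x - log_mgf M (X l 0) t))
      \<le> (SUP t. ereal (t * x) - Lambda M X l t)"
    by (rule SUP_least) (auto simp: Lambda_eq intro: SUP_upper2)
qed

lemma log_mgf_has_deriv_Lambda_r:
  assumes "assm3 M X l" "t \<in> interior (mgf_dom M (X l 0))"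
  shows "(log_mgf M (X l 0) has_real_derivative deriv (Lambda_r M X l) t) (at t)"
proof (rule has_field_derivative_transform_within_open)
  show "(Lambda_r M X l has_real_derivative deriv (Lambda_r M X l) t) (at t)"
    using assms by (simp add: assm3_def dom_Lambda_eq Let_def DERIV_deriv_iff_real_differentiable)
qed (use assms(2) interior_subset Lambda_r_eq in auto)

lemma cgf_replication:
  assumes "assm2 M X l" "assm3 M X l"
  shows "cgf (mgf_dom M (X l 0)) (log_mgf M (X l 0)) (expectation (X l 0))"
proof (rule cgf_log_mgf)
  show "0 \<in> interior (mgf_dom M (X l 0))"
    using assms(1) by (simp add: assm2_def dom_Lambda_eq)
  then show "(log_mgf M (X l 0) has_real_derivative deriv (Lambda_r M X l) 0) (at 0)"
    by (rule log_mgf_has_deriv_Lambda_r[OF assms(2)])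
  fix u v \<theta> :: real
  assume uv: "u \<in> interior (mgf_dom M (X l 0))" "v \<in> interior (mgf_dom M (X l 0))" "u \<noteq> v"
    and \<theta>: "0 < \<theta>" "\<theta> < 1"
  then have "u \<in> mgf_dom M (X l 0)" "v \<in> mgf_dom M (X l 0)"
    using interior_subset by auto
  then have "(1 - \<theta>) * u + \<theta> * v \<in> mgf_dom M (X l 0)"
    using log_mgf_convex_combination[of "X l 0" u v \<theta>] \<theta> by auto
  moreover have "\<forall>a\<in>interior (mgf_dom M (X l 0)). \<forall>b\<in>interior (mgf_dom M (X l 0)).
      \<forall>t. a \<noteq> b \<and> 0 < t \<and> t < 1 \<longrightarrow> Lambda_r M X l (t * a + (1 - t) * b) < t * Lambda_r M X l a + (1 - t) * Lambda_r M X l b"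
    using assms(2) unfolding assm3_def Let_def dom_Lambda_eq by blast
  from this[rule_format, OF uv(1,2), of "1 - \<theta>"] uv(3) \<theta>
  have "Lambda_r M X l ((1 - \<theta>) * u + \<theta> * v) < (1 - \<theta>) * Lambda_r M X l u + \<theta> * Lambda_r M X l v"
    by simp
  ultimately show "log_mgf M (X l 0) ((1 - \<theta>) * u + \<theta> * v)
      < (1 - \<theta>) * log_mgf M (X l 0) u + \<theta> * log_mgf M (X l 0) v"
    using \<open>u \<in> mgf_dom M (X l 0)\<close> \<open>v \<in> mgf_dom M (X l 0)\<close> by (simp add: Lambda_r_eq)
qed simp

lemma legendre_finite_on_F_set:
  assumes "assm2 M X l" "assm3 M X l" "s \<in> F_set M X l"
  shows "legendre (mgf_dom M (X l 0)) (log_mgf M (X l 0)) s < \<infinity>"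
proof -
  interpret cgf "mgf_dom M (X l 0)" "log_mgf M (X l 0)" "expectation (X l 0)"
    by (rule cgf_replication[OF assms(1,2)])
  obtain t where t: "t \<in> interior (mgf_dom M (X l 0))" "s = deriv (Lambda_r M X l) t"
    using assms(3) by (auto simp: F_set_def dom_Lambda_eq)
  have "rate s \<le> ereal (t * s - log_mgf M (X l 0) t)"
    using t log_mgf_has_deriv_Lambda_r[OF assms(2) t(1)] by (intro rate_at_slope) auto
  then show ?thesis
    using le_less_trans[of "rate s" _ \<infinity>] by simp
qed

end

lemma between_ends_if_strictly_decreasing:
  fixes f :: "nat \<Rightarrow> real"
  assumes "\<And>a b. a \<in> {1..k} \<Longrightarrow> b \<in> {1..k} \<Longrightarrow> a < b \<Longrightarrow> f a > f b" and "x \<in> {1..k}"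
  shows "f x \<in> {f k..f 1}"
  using assms(1)[OF assms(2), of k] assms(1)[OF _ assms(2), of 1] assms(2)
  by (cases "x = k"; cases "x = 1") auto

lemma iid_replicationsI:
  assumes "prob_space M" "l \<in> I" "\<And>r. X l r \<in> borel_measurable M"
    and "prob_space.indep_vars M (\<lambda>_. borel) (\<lambda>(l, r). X l r) (I \<times> UNIV)"
    and "\<And>r. distr M borel (X l r) = distr M borel (X l 0)"
  shows "iid_replications M X l"
proof (intro iid_replications.intro iid_replications_axioms.intro)
  show "prob_space.indep_vars M (\<lambda>_. borel) (\<lambda>(l, r). X l r) ({l} \<times> UNIV)"
    by (rule prob_space.indep_vars_subset[OF assms(1,4)]) (use assms(2) in auto)
qed (use assms in auto)

theorem lemma3:
  fixes M :: "'a measure" and X :: "nat \<Rightarrow> nat \<Rightarrow> 'a \<Rightarrow> real"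
    and k m i j :: nat and \<sigma> :: "nat \<Rightarrow> nat" and \<mu> :: "nat \<Rightarrow> real"
  assumes "prob_space M"
    and "k \<ge> 2" and "1 \<le> m" and "m < k"
    and rv: "\<And>l r. l \<in> {1..k} \<Longrightarrow> X l r \<in> borel_measurable M"
    and indep: "prob_space.indep_vars M (\<lambda>_. borel) (\<lambda>(l, r). X l r) ({1..k} \<times> UNIV)"
    and ident: "\<And>l r. l \<in> {1..k} \<Longrightarrow> distr M borel (X l r) = distr M borel (X l 0)"
    and mu_def: "\<And>l. l \<in> {1..k} \<Longrightarrow> \<mu> l = prob_space.expectation M (X l 0)"
    and distinct: "inj_on \<mu> {1..k}"
    and sigma: "bij_betw \<sigma> {1..k} {1..k}"
    and ordered: "\<And>a b. a \<in> {1..k} \<Longrightarrow> b \<in> {1..k} \<Longrightarrow> a < b \<Longrightarrow> \<mu> (\<sigma> a) > \<mu> (\<sigma> b)"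
    and A1: "\<And>l. l \<in> {1..k} \<Longrightarrow> assm1 M X l"
    and A2: "\<And>l. l \<in> {1..k} \<Longrightarrow> assm2 M X l"
    and A3: "\<And>l. l \<in> {1..k} \<Longrightarrow> assm3 M X l"
    and A4: "\<And>l. l \<in> {1..k} \<Longrightarrow> {\<mu> (\<sigma> k)..\<mu> (\<sigma> 1)} \<subseteq> interior (F_set M X l)"
    and "i \<in> {1..m}" and "j \<in> {m+1..k}"
  shows "(\<forall>ri ri' rj. 0 < ri \<and> ri < ri' \<and> 0 < rj \<longrightarrow> G M X \<sigma> i j ri rj < G M X \<sigma> i j ri' rj)
       \<and> (\<forall>ri rj rj'. 0 < ri \<and> 0 < rj \<and> rj < rj' \<longrightarrow> G M X \<sigma> i j ri rj < G M X \<sigma> i j ri rj')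
       \<and> (\<forall>ri rj. 0 \<le> ri \<and> 0 \<le> rj \<and> min ri rj = 0 \<longrightarrow> G M X \<sigma> i j ri rj = 0)"
proof -
  have ik: "i \<in> {1..k}" and jk: "j \<in> {1..k}" and "i < j"
    using \<open>i \<in> {1..m}\<close> \<open>j \<in> {m+1..k}\<close> \<open>m < k\<close> by auto
  have \<sigma>: "\<sigma> x \<in> {1..k}" if "x \<in> {1..k}" for x
    using sigma that by (auto simp: bij_betw_def)
  have iid: "iid_replications M X (\<sigma> x)" if "x \<in> {1..k}" for x
    using iid_replicationsI[OF \<open>prob_space M\<close> \<sigma>[OF that] rv[OF \<sigma>[OF that]] indep]
      ident[OF \<sigma>[OF that]] .
  have cgf: "cgf (mgf_dom M (X (\<sigma> x) 0)) (log_mgf M (X (\<sigma> x) 0)) (\<mu> (\<sigma> x))" if "x \<in> {1..k}" for x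
    using iid_replications.cgf_replication[OF iid[OF that] A2[OF \<sigma>[OF that]] A3[OF \<sigma>[OF that]]]
    by (simp only: mu_def[OF \<sigma>[OF that]])
  have rate_finite: "legendre (mgf_dom M (X (\<sigma> y) 0)) (log_mgf M (X (\<sigma> y) 0)) (\<mu> (\<sigma> x)) < \<infinity>"
    if "x \<in> {1..k}" "y \<in> {1..k}" for x y
  proof (rule iid_replications.legendre_finite_on_F_set[OF iid[OF that(2)]])
    show "\<mu> (\<sigma> x) \<in> F_set M X (\<sigma> y)"
      using A4[OF \<sigma>[OF that(2)]] interior_subset
        between_ends_if_strictly_decreasing[of k "\<lambda>a. \<mu> (\<sigma> a)", OF ordered that(1)]
      by blast
  qed (use A2 A3 \<sigma>[OF that(2)] in auto)
  interpret cgf_pair "mgf_dom M (X (\<sigma> i) 0)" "log_mgf M (X (\<sigma> i) 0)" "\<mu> (\<sigma> i)"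
    "mgf_dom M (X (\<sigma> j) 0)" "log_mgf M (X (\<sigma> j) 0)" "\<mu> (\<sigma> j)"
    using cgf[OF ik] cgf[OF jk] ordered[OF ik jk \<open>i < j\<close>] by (simp add: cgf_pair_def cgf_pair_axioms_def)
  have "G M X \<sigma> i j p q = mixed_rate p q" for p q
    using iid_replications.Lambda_star_eq[OF iid[OF ik]] iid_replications.Lambda_star_eq[OF iid[OF jk]]
    by (simp add: G_def mixed_rate_def)
  then show ?thesis
    using mixed_rate_monotonicity[OF rate_finite[OF jk ik] rate_finite[OF ik jk]] by simp
qed

end
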